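(* Let $d\ge200$, $\alpha=2$ and $p_0=1-\Phi(-2)$, and let $\mathcal{D}$ be the distribution defined in the context. Let $S_\infty(\mathbf{x})=\{\mathbf{x}+\mathbf{r}:\|\mathbf{r}\|_\infty\le 3/\sqrt d\}$, $S_1(\mathbf{x})=\{\mathbf{x}+\mathbf{r}:\|\mathbf{r}\|_1\le3\}$, and $S_{\mathrm{affine}}(\mathbf{x})=\{\mathbf{x}+\mathbf{r}_1+\mathbf{r}_2:\beta\in[0,1],\ \|\mathbf{r}_1\|_\infty\le 3\beta/\sqrt d,\ \|\mathbf{r}_2\|_1\le3(1-\beta)\}$. Then there exists a (necessarily non-linear) classifier $g:\mathbb{R}^{d+1}\to\{-1,+1\}$ with $\mathcal{R}^{\mathrm{max}}_{\mathrm{adv}}(g;S_\infty,S_1)\le 0.35$, while every classifier $f:\mathbb{R}^{d+1}\to\{-1,+1\}$ satisfies $\mathcal{R}_{\mathrm{adv}}(f;S_{\mathrm{affine}})\ge 1/2$.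
   Context: $\Phi$ is the standard normal CDF. The distribution $\mathcal{D}$ over $(\mathbf{x},y)$, $\mathbf{x}=(x_0,\dots,x_d)$: $y$ uniform on $\{-1,+1\}$; given $y$, $x_0=+y$ with probability $p_0$ and $-y$ with probability $1-p_0$; $x_1,\dots,x_d$ i.i.d. $\mathcal{N}(y\eta,1)$ with $\eta=\alpha/\sqrt d$, independent of $x_0$. Adversarial risk: $\mathcal{R}_{\mathrm{adv}}(f;S)=\Pr_{(\mathbf{x},y)\sim\mathcal{D}}[\exists\,\mathbf{x}'\in S(\mathbf{x}): f(\mathbf{x}')\neq y]$; $\mathcal{R}^{\mathrm{max}}_{\mathrm{adv}}(f;S_\infty,S_1)=\mathcal{R}_{\mathrm{adv}}(f;S_\infty\cup S_1)$ with pointwise union of sets. *)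

theory Defs
  imports "HOL-Probability.Probability"
begin

text \<open>Points of R^(d+1) are pairs (x0, z) with x0 the distinguished coordinate
  and z :: real^'n the remaining d = CARD('n) coordinates.\<close>

definition Phi :: "real \<Rightarrow> real" where
  "Phi t = measure (density lborel std_normal_density) {..t}"

definition linf_norm :: "real \<times> (real^'n) \<Rightarrow> real" where
  "linf_norm r = max \<bar>fst r\<bar> (Max (range (\<lambda>i. \<bar>snd r $ i\<bar>)))"

definition l1_norm :: "real \<times> (real^'n) \<Rightarrow> real" where
  "l1_norm r = \<bar>fst r\<bar> + (\<Sum>i\<in>UNIV. \<bar>snd r $ i\<bar>)"

definition gauss_vec :: "real \<Rightarrow> (real^'n) measure" where
  "gauss_vec m = density lborel (\<lambda>z. \<Prod>i\<in>UNIV. normal_density m 1 (z $ i))"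

definition data_dist :: "real \<Rightarrow> real \<Rightarrow> ((real \<times> (real^'n)) \<times> real) measure" where
  "data_dist p0 eta =
     measure_pmf (pmf_of_set {-1, 1::real}) \<bind> (\<lambda>y.
       measure_pmf (bernoulli_pmf p0) \<bind> (\<lambda>b.
         distr (gauss_vec (y * eta)) borel (\<lambda>z. (((if b then y else - y), z), y))))"

text \<open>Adversarial risk, taken as the outer probability of the bad event
  (coincides with its probability whenever the event is measurable).\<close>
definition adv_risk ::
  "((real \<times> (real^'n)) \<times> real) measure \<Rightarrow> (real \<times> (real^'n) \<Rightarrow> real)
     \<Rightarrow> (real \<times> (real^'n) \<Rightarrow> (real \<times> (real^'n)) set) \<Rightarrow> real" where
  "adv_risk D f S = Inf {measure D A | A. A \<in> sets D \<and>
      {(x, y) \<in> space D. \<exists>x' \<in> S x. f x' \<noteq> y} \<subseteq> A}"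

definition S_inf :: "real \<Rightarrow> real \<times> (real^'n) \<Rightarrow> (real \<times> (real^'n)) set" where
  "S_inf d x = {x + r | r. linf_norm r \<le> 3 / sqrt d}"

definition S_one :: "real \<times> (real^'n) \<Rightarrow> (real \<times> (real^'n)) set" where
  "S_one x = {x + r | r. l1_norm r \<le> 3}"

definition S_affine :: "real \<Rightarrow> real \<times> (real^'n) \<Rightarrow> (real \<times> (real^'n)) set" where
  "S_affine d x = {x + r1 + r2 | r1 r2. \<exists>\<beta>\<in>{0..1}.
      linf_norm r1 \<le> 3 * \<beta> / sqrt d \<and> l1_norm r2 \<le> 3 * (1 - \<beta>)}"

end

theory Submission
  imports Defs
begin

text \<open>
  Lower bound: for x0, x0' \<in> {-1, 1} the point (0, w) is an affine perturbation both of
  (x0, \<eta>\<one> + w) with label 1 and of (x0', -\<eta>\<one> + w) with label -1: take \<beta> = 2/3, shift the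
  last d coordinates by \<mp>\<eta> (sup-norm 2/\<surd>d) and move x0 to 0 (l1-norm 1).  Since w has the
  same standard Gaussian law under both labels, every classifier errs on one of the two, so the
  risk is at least 1/2.

  Upper bound: the classifier trusts x0 when |x0| \<ge> 3/4 unless the coordinate sum S strongly
  contradicts it, and otherwise predicts sign S.  A sup-norm attack moves x0 by at most
  3/\<surd>d \<le> 1/4 but S by up to 3\<surd>d, while an l1 attack that flips x0 leaves S almost unchanged;
  hence the prediction is correct whenever x0 = y and y S \<ge> 1.55\<surd>d.  The latter fails with
  probability \<Phi>(-0.45) \<le> 0.327 and the former with probability \<Phi>(-2) \<le> 0.0231.  Both normal
  tails are bounded by integrating the Taylor polynomial of exp(-x^2/2) of degree 14, which lies
  below it.
\<close>

section \<open>Tail bounds for the standard normal distribution\<close>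

abbreviation std_normal :: "real measure" where
  "std_normal \<equiv> density lborel std_normal_density"

interpretation std_normal: prob_space std_normal
  by (rule prob_space_normal_density) simp

lemma exp_ge_taylor_even:
  fixes x :: real
  assumes "even n"
  shows "(\<Sum>m<n. x ^ m / fact m) \<le> exp x"
proof -
  obtain t where "exp x = (\<Sum>m<n. x ^ m / fact m) + exp t / fact n * x ^ n"
    using Maclaurin_exp_le by blast
  moreover have "0 \<le> exp t / fact n * x ^ n"
    using assms by (simp add: zero_le_even_power)
  ultimately show ?thesis by linarith
qed

definition normal_taylor_primitive :: "nat \<Rightarrow> real \<Rightarrow> real" where
  "normal_taylor_primitive n x = (\<Sum>m<n. (-1/2) ^ m * x ^ (2*m+1) / (real (2*m+1) * fact m))"

lemma normal_taylor_primitive_has_derivative: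
  "(normal_taylor_primitive n has_real_derivative (\<Sum>m<n. (- x\<^sup>2 / 2) ^ m / fact m)) (at x)"
  unfolding normal_taylor_primitive_def
proof (rule DERIV_sum)
  fix m
  have "((\<lambda>x. (-1/2) ^ m * x ^ (2*m+1) / (real (2*m+1) * fact m)) has_real_derivative
      (-1/2) ^ m * (real (2*m+1) * x ^ (2*m)) / (real (2*m+1) * fact m)) (at x)"
    by (intro DERIV_cdivide DERIV_cmult) (use DERIV_pow[of "2*m+1" x] in simp)
  also have "(-1/2) ^ m * (real (2*m+1) * x ^ (2*m)) / (real (2*m+1) * fact m) = (- x\<^sup>2 / 2) ^ m / fact m"
  proof -
    have "(- x\<^sup>2 / 2) ^ m = (-1/2) ^ m * x ^ (2*m)"
      by (simp add: power_mult flip: power_mult_distrib)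
    moreover have "real (2*m+1) \<noteq> 0" by linarith
    ultimately show ?thesis by (simp only: mult_divide_mult_cancel_left_if) simp
  qed
  finally show "((\<lambda>x. (-1/2) ^ m * x ^ (2*m+1) / (real (2*m+1) * fact m)) has_real_derivative
      (- x\<^sup>2 / 2) ^ m / fact m) (at x)" .
qed

lemma normal_taylor_primitive_minus:
  "normal_taylor_primitive n (- x) = - normal_taylor_primitive n x"
  unfolding normal_taylor_primitive_def by (simp add: sum_negf)

lemma std_normal_density_has_integral_interval:
  "(std_normal_density has_integral integral {a..b} std_normal_density) {a..b}"
  by (intro integrable_integral integrable_continuous_interval)
    (simp add: std_normal_density_def continuous_intros)

lemma measure_std_normal_interval:
  assumes "a \<le> b"
  shows "measure std_normal {a..b} = integral {a..b} std_normal_density"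
proof -
  have "emeasure std_normal {a..b} = ennreal (integral {a..b} std_normal_density)"
    using nn_integral_has_integral_lebesgue'[OF _ std_normal_density_has_integral_interval]
    by (simp add: emeasure_density)
  moreover have "0 \<le> integral {a..b} std_normal_density"
    by (rule has_integral_nonneg[OF std_normal_density_has_integral_interval]) simp
  ultimately show ?thesis by (simp add: measure_def)
qed

lemma measure_std_normal_singleton: "measure std_normal {a} = 0"
  using measure_std_normal_interval[of a a] by simp

lemma measure_std_normal_interval_ge_taylor:
  assumes "0 \<le> t" "even n"
  shows "normal_taylor_primitive n t / sqrt (2*pi) \<le> measure std_normal {-t..0}"
proof -
  have "((\<lambda>x. (\<Sum>m<n. (- x\<^sup>2 / 2) ^ m / fact m)) has_integral
      normal_taylor_primitive n 0 - normal_taylor_primitive n (-t)) {-t..0}"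
    using assms(1) normal_taylor_primitive_has_derivative
    by (intro fundamental_theorem_of_calculus)
      (auto simp: has_real_derivative_iff_has_vector_derivative[symmetric] intro: DERIV_subset)
  moreover have "normal_taylor_primitive n 0 = 0"
    by (simp add: normal_taylor_primitive_def)
  ultimately have "((\<lambda>x. (\<Sum>m<n. (- x\<^sup>2 / 2) ^ m / fact m) / sqrt (2*pi)) has_integral
      normal_taylor_primitive n t / sqrt (2*pi)) {-t..0}"
    by (simp add: has_integral_divide normal_taylor_primitive_minus)
  then have "normal_taylor_primitive n t / sqrt (2*pi) \<le> integral {-t..0} std_normal_density"
    using std_normal_density_has_integral_interval
    by (rule has_integral_le)
      (simp add: std_normal_density_def divide_right_mono exp_ge_taylor_even[OF assms(2)])
  then show ?thesis using assms(1) by (simp add: measure_std_normal_interval)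
qed

lemma std_normal_distr_uminus: "distr std_normal borel uminus = std_normal"
proof -
  have "distr std_normal borel uminus = density (distr lborel borel uminus) std_normal_density"
    by (subst density_distr) (auto simp: comp_def normal_density_def)
  then show ?thesis by (simp add: lborel_distr_uminus)
qed

lemma measure_std_normal_uminus:
  assumes "A \<in> sets borel"
  shows "measure std_normal (uminus -` A) = measure std_normal A"
proof -
  have "measure std_normal A = measure (distr std_normal borel uminus) A"
    by (simp add: std_normal_distr_uminus)
  also have "\<dots> = measure std_normal (uminus -` A)"
    using assms by (subst measure_distr) auto
  finally show ?thesis by simp
qed

lemma measure_std_normal_atMost_0: "measure std_normal {..0} = 1/2"
proof -
  have "measure std_normal {..0} = measure std_normal {0..}"
    using measure_std_normal_uminus[of "{0..}"] by (simp add: vimage_def atMost_def)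
  moreover have "{..0} \<union> {0..} = (UNIV :: real set)" by auto
  then have "measure std_normal ({..0} \<union> {0..}) = 1"
    using std_normal.prob_space by simp
  moreover have "{..0} \<inter> {0..} = {0::real}" by auto
  ultimately show ?thesis
    using measure_std_normal_singleton[of 0]
    by (simp add: measure_Un3 std_normal.fmeasurable_eq_sets)
qed

lemma Phi_neg_le:
  assumes "0 \<le> t" "even n"
  shows "Phi (-t) \<le> 1/2 - normal_taylor_primitive n t / sqrt (2*pi)"
proof -
  have "{..-t} \<inter> {-t..0} = {-t}" using assms(1) by auto
  then have "measure std_normal ({..-t} \<union> {-t..0}) = Phi (-t) + measure std_normal {-t..0}"
    by (simp add: Phi_def measure_Un3 std_normal.fmeasurable_eq_sets measure_std_normal_singleton)
  moreover have "{..-t} \<union> {-t..0} = {..0::real}" using assms(1) by auto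
  ultimately show ?thesis
    using measure_std_normal_atMost_0 measure_std_normal_interval_ge_taylor[OF assms] by simp
qed

lemma measure_std_normal_lessThan_le: "measure std_normal {..<t} \<le> Phi t"
  unfolding Phi_def by (rule std_normal.finite_measure_mono) auto

lemma measure_std_normal_greaterThan: "measure std_normal {t<..} = measure std_normal {..< -t}"
proof -
  have "uminus -` {t<..} = {..< -t}" by auto
  then show ?thesis using measure_std_normal_uminus[of "{t<..}"] by simp
qed

lemma sqrt_2pi_le: "sqrt (2*pi) \<le> 25067/10000"
proof (rule real_le_lsqrt)
  show "2*pi \<le> (25067/10000)\<^sup>2" using pi_approx by (simp add: power2_eq_square)
qed auto

lemma Phi_neg_2_le: "Phi (-2) \<le> 231/10000"
proof -
  have "(11956/10000) / (25067/10000) \<le> normal_taylor_primitive 8 2 / sqrt (2*pi)"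
    using sqrt_2pi_le
    by (intro frac_le) (auto simp: normal_taylor_primitive_def eval_nat_numeral lessThan_Suc)
  then show ?thesis using Phi_neg_le[of 2 8] by simp
qed

lemma Phi_neg_045_le: "Phi (-(45/100)) \<le> 327/1000"
proof -
  have "(4350/10000) / (25067/10000) \<le> normal_taylor_primitive 8 (45/100) / sqrt (2*pi)"
    using sqrt_2pi_le
    by (intro frac_le) (auto simp: normal_taylor_primitive_def eval_nat_numeral lessThan_Suc)
  then show ?thesis using Phi_neg_le[of "45/100" 8] by simp
qed

section \<open>Gaussian vectors\<close>

abbreviation normal_measure :: "real \<Rightarrow> real measure" where
  "normal_measure m \<equiv> density lborel (normal_density m 1)"

lemma prob_space_normal_measure: "prob_space (normal_measure m)"
  by (rule prob_space_normal_density) simp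

lemma vec_lambda_borel_measurable:
  assumes "sets M = sets (borel :: real measure)"
  shows "(\<lambda>f. vec_lambda f :: real^'n) \<in> borel_measurable (PiM UNIV (\<lambda>_::'n. M))"
proof -
  have "sets (PiM UNIV (\<lambda>_::'n. M)) = sets (PiM UNIV (\<lambda>_::'n. lborel))"
    using assms by (intro sets_PiM_cong) auto
  moreover have "(\<lambda>f. vec_lambda f :: real^'n) \<in> borel_measurable (PiM UNIV (\<lambda>_::'n. lborel))"
  proof (subst borel_measurable_euclidean_space, intro ballI)
    fix b :: "real^'n" assume "b \<in> Basis"
    then obtain j where "b = axis j 1" by (auto simp: Basis_vec_def)
    then have "(\<lambda>f. vec_lambda f \<bullet> b) = (\<lambda>f. f j)" by (simp add: inner_axis)
    then show "(\<lambda>f. vec_lambda f \<bullet> b) \<in> borel_measurable (PiM UNIV (\<lambda>_::'n. lborel))" by simp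
  qed
  ultimately show ?thesis by (simp cong: measurable_cong_sets)
qed

lemma lborel_vec_eq_distr_PiM:
  "(lborel :: (real^'n) measure) = distr (PiM UNIV (\<lambda>_::'n. lborel)) borel vec_lambda"
proof (rule lborel_eqI)
  interpret product_sigma_finite "\<lambda>_::'n. lborel" ..
  fix l u :: "real^'n"
  assume lu: "\<And>b. b \<in> Basis \<Longrightarrow> l \<bullet> b \<le> u \<bullet> b"
  have "vec_lambda -` box l u \<inter> space (PiM UNIV (\<lambda>_::'n. lborel)) = PiE UNIV (\<lambda>i. {l$i<..<u$i})"
    by (auto simp: mem_box_cart space_PiM PiE_def Pi_def extensional_def)
  then have "emeasure (distr (PiM UNIV (\<lambda>_::'n. lborel)) borel vec_lambda) (box l u)
      = emeasure (PiM UNIV (\<lambda>_::'n. lborel)) (PiE UNIV (\<lambda>i. {l$i<..<u$i}))"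
    by (subst emeasure_distr) (auto simp: vec_lambda_borel_measurable)
  also have "\<dots> = (\<Prod>i\<in>UNIV. emeasure lborel {l$i<..<u$i})"
    by (rule emeasure_PiM) auto
  also have "\<dots> = ennreal (\<Prod>i\<in>UNIV. (u$i - l$i))"
    using lu[of "axis _ 1"] by (subst prod_ennreal[symmetric]) (auto simp: inner_axis intro!: prod.cong)
  also have "(\<Prod>i\<in>UNIV. (u$i - l$i)) = (\<Prod>b\<in>Basis. (u - l) \<bullet> b)"
    by (simp add: Basis_vec_def prod.reindex inj_on_def axis_eq_axis inner_axis UNION_singleton_eq_range)
  finally show "emeasure (distr (PiM UNIV (\<lambda>_::'n. lborel)) borel vec_lambda) (box l u)
      = (\<Prod>b\<in>Basis. (u - l) \<bullet> b)" .
qed simp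

lemma density_PiM_normal_density:
  "density (PiM UNIV (\<lambda>_::'n::finite. lborel)) (\<lambda>f. \<Prod>i\<in>UNIV. ennreal (normal_density m 1 (f i)))
   = PiM UNIV (\<lambda>_::'n. normal_measure m)"
proof -
  interpret lborel: product_sigma_finite "\<lambda>_::'n. lborel" ..
  interpret product_prob_space "\<lambda>_::'n. normal_measure m"
    by (simp add: product_prob_space_def product_prob_space_axioms_def product_sigma_finite_def
        prob_space_normal_measure prob_space_imp_sigma_finite)
  let ?g = "\<lambda>f. \<Prod>i\<in>UNIV. ennreal (normal_density m 1 (f i))"
  show ?thesis
  proof (rule PiM_eqI)
    fix A :: "'n \<Rightarrow> real set"
    assume "\<And>i. i \<in> UNIV \<Longrightarrow> A i \<in> sets (normal_measure m)"
    then have A: "\<And>i. A i \<in> sets borel" by simp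
    have "emeasure (density (PiM UNIV (\<lambda>_. lborel)) ?g) (PiE UNIV A)
       = (\<integral>\<^sup>+ f. ?g f * indicator (PiE UNIV A) f \<partial>PiM UNIV (\<lambda>_. lborel))"
      using A by (subst emeasure_density) (auto intro!: sets_PiM_I_finite)
    also have "\<dots> = (\<integral>\<^sup>+ f. (\<Prod>i\<in>UNIV. ennreal (normal_density m 1 (f i)) * indicator (A i) (f i))
        \<partial>PiM UNIV (\<lambda>_. lborel))"
      by (intro nn_integral_cong) (auto simp: indicator_def PiE_def Pi_def prod.distrib)
    also have "\<dots> = (\<Prod>i\<in>UNIV. emeasure (normal_measure m) (A i))"
      using A by (subst lborel.product_nn_integral_prod) (auto simp: emeasure_density)
    finally show "emeasure (density (PiM UNIV (\<lambda>_. lborel)) ?g) (PiE UNIV A)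
       = (\<Prod>i\<in>UNIV. emeasure (normal_measure m) (A i))" .
  qed (simp_all cong: sets_PiM_cong)
qed

lemma gauss_vec_eq_distr_PiM:
  "(gauss_vec m :: (real^'n::finite) measure) = distr (PiM UNIV (\<lambda>_::'n. normal_measure m)) borel vec_lambda"
proof -
  have "(gauss_vec m :: (real^'n) measure) =
      density (distr (PiM UNIV (\<lambda>_::'n. lborel)) borel vec_lambda) (\<lambda>z. ennreal (\<Prod>i\<in>UNIV. normal_density m 1 (z $ i)))"
    unfolding gauss_vec_def lborel_vec_eq_distr_PiM[symmetric] ..
  also have "\<dots> = distr (density (PiM UNIV (\<lambda>_::'n. lborel)) (\<lambda>f. \<Prod>i\<in>UNIV. ennreal (normal_density m 1 (f i)))) borel vec_lambda"
    by (subst density_distr) (auto simp: vec_lambda_borel_measurable comp_def prod_ennreal)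
  finally show ?thesis by (simp only: density_PiM_normal_density)
qed

lemma sets_gauss_vec [simp]: "sets (gauss_vec m :: (real^'n::finite) measure) = sets borel"
  unfolding gauss_vec_def by simp

lemma space_gauss_vec [simp]: "space (gauss_vec m :: (real^'n::finite) measure) = UNIV"
  unfolding gauss_vec_def by simp

lemma prob_space_gauss_vec: "prob_space (gauss_vec m :: (real^'n::finite) measure)"
  unfolding gauss_vec_eq_distr_PiM
  by (intro prob_space.prob_space_distr prob_space_PiM prob_space_normal_measure vec_lambda_borel_measurable) simp_all

lemma distributed_standardized_sum:
  "distributed (PiM UNIV (\<lambda>_::'n::finite. normal_measure m)) lborel
     (\<lambda>f. ((\<Sum>i\<in>UNIV. f i) - real CARD('n) * m) / sqrt (real CARD('n))) std_normal_density"
proof -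
  let ?P = "PiM UNIV (\<lambda>_::'n. normal_measure m)"
  interpret P: prob_space ?P by (intro prob_space_PiM prob_space_normal_measure)
  have component: "distr ?P borel (\<lambda>f. f i) = normal_measure m" for i
  proof -
    have "distr ?P borel (\<lambda>f. f i) = distr ?P (normal_measure m) (\<lambda>f. f i)"
      by (rule distr_cong) auto
    also have "\<dots> = normal_measure m"
      by (rule distr_PiM_component) (auto simp: prob_space_normal_measure)
    finally show ?thesis .
  qed
  have "P.indep_vars (\<lambda>_. borel) (\<lambda>i f. f i) UNIV"
  proof (subst P.indep_vars_iff_distr_eq_PiM')
    have "distr ?P (PiM UNIV (\<lambda>_. borel)) (\<lambda>x. \<lambda>i\<in>UNIV. x i) = distr ?P ?P (\<lambda>x. x)"
      by (rule distr_cong) (auto simp: space_PiM cong: sets_PiM_cong)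
    also have "\<dots> = PiM UNIV (\<lambda>i. distr ?P borel (\<lambda>x. x i))"
      by (simp add: component)
    finally show "distr ?P (PiM UNIV (\<lambda>_. borel)) (\<lambda>x. \<lambda>i\<in>UNIV. x i) = PiM UNIV (\<lambda>i. distr ?P borel (\<lambda>x. x i))" .
  qed auto
  moreover have "distributed ?P lborel (\<lambda>f. f i) (normal_density m 1)" for i
    using component[of i] by (auto simp: distributed_def cong: distr_cong)
  ultimately have "distributed ?P lborel (\<lambda>f. \<Sum>i\<in>UNIV. f i) (normal_density (real CARD('n) * m) (sqrt (real CARD('n))))"
    using P.sum_indep_normal[where X="\<lambda>i f. f i" and I=UNIV and \<sigma>="\<lambda>_. 1" and \<mu>="\<lambda>_. m"] by simp
  then show ?thesis
    by (subst (asm) P.normal_standard_normal_convert) auto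
qed

lemma measure_gauss_vec_standardized_sum:
  assumes "B \<in> sets borel"
  shows "measure (gauss_vec m :: (real^'n::finite) measure)
           {z. ((\<Sum>i\<in>UNIV. z$i) - real CARD('n) * m) / sqrt (real CARD('n)) \<in> B}
         = measure std_normal B"
proof -
  let ?P = "PiM UNIV (\<lambda>_::'n. normal_measure m)"
  let ?Z = "\<lambda>f::'n\<Rightarrow>real. ((\<Sum>i\<in>UNIV. f i) - real CARD('n) * m) / sqrt (real CARD('n))"
  have d: "distributed ?P lborel ?Z std_normal_density" by (rule distributed_standardized_sum)
  have "{z::real^'n. ((\<Sum>i\<in>UNIV. z$i) - real CARD('n) * m) / sqrt (real CARD('n)) \<in> B} \<in> sets borel"
    using assms by measurable
  then have "measure (gauss_vec m :: (real^'n) measure) {z. ((\<Sum>i\<in>UNIV. z$i) - real CARD('n) * m) / sqrt (real CARD('n)) \<in> B}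
      = measure ?P (?Z -` B \<inter> space ?P)"
    unfolding gauss_vec_eq_distr_PiM
    by (subst measure_distr) (auto simp: vec_lambda_borel_measurable vimage_def)
  also have "\<dots> = measure (distr ?P lborel ?Z) B"
    using d assms by (subst measure_distr) (auto simp: distributed_def)
  finally show ?thesis using d by (simp add: distributed_def)
qed

lemma gauss_vec_eq_distr_shift:
  "(gauss_vec m :: (real^'n::finite) measure) = distr (gauss_vec 0) borel (\<lambda>w. (\<chi> i. m) + w)"
proof -
  have "(gauss_vec m :: (real^'n) measure) =
     density (distr lborel borel ((+) (\<chi> i. m))) (\<lambda>z. ennreal (\<Prod>i\<in>UNIV. normal_density m 1 (z $ i)))"
    unfolding gauss_vec_def lborel_distr_plus ..
  also have "\<dots> = distr (density lborel (\<lambda>w::real^'n. ennreal (\<Prod>i\<in>UNIV. normal_density m 1 (((\<chi> i. m) + w) $ i)))) borel ((+) (\<chi> i. m))"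
    by (subst density_distr) (auto simp: comp_def)
  finally show ?thesis unfolding gauss_vec_def by (simp add: normal_density_def)
qed

lemma measure_gauss_vec_shift:
  assumes "A \<in> sets borel"
  shows "measure (gauss_vec m :: (real^'n::finite) measure) A = measure (gauss_vec 0) {w. (\<chi> i. m) + w \<in> A}"
proof -
  have "((+) (\<chi> i. m)) \<in> (gauss_vec 0 :: (real^'n) measure) \<rightarrow>\<^sub>M borel"
    by (simp cong: measurable_cong_sets)
  then show ?thesis using assms
    by (subst gauss_vec_eq_distr_shift) (simp add: measure_distr vimage_def)
qed

definition data_cond_dist :: "real \<Rightarrow> real \<Rightarrow> bool \<Rightarrow> ((real \<times> (real^'n::finite)) \<times> real) measure" where
  "data_cond_dist eta y b = distr (gauss_vec (y * eta)) borel (\<lambda>z. (((if b then y else - y), z), y))"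

definition data_label_dist :: "real \<Rightarrow> real \<Rightarrow> real \<Rightarrow> ((real \<times> (real^'n::finite)) \<times> real) measure" where
  "data_label_dist p eta y = measure_pmf (bernoulli_pmf p) \<bind> data_cond_dist eta y"

lemma data_dist_eq_bind_label_dist: "data_dist p eta = measure_pmf (pmf_of_set {-1, 1}) \<bind> data_label_dist p eta"
  unfolding data_dist_def data_label_dist_def data_cond_dist_def ..

lemma data_point_measurable:
  "(\<lambda>z::real^'n::finite. ((c, z), y)) \<in> gauss_vec m \<rightarrow>\<^sub>M borel"
  by (subst measurable_cong_sets[OF sets_gauss_vec refl]) (intro borel_measurable_continuous_onI continuous_intros)

lemma emeasure_data_cond_dist:
  assumes "A \<in> sets borel"
  shows "emeasure (data_cond_dist eta y b :: ((real \<times> (real^'n::finite)) \<times> real) measure) A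
     = measure (gauss_vec (y * eta)) {z. (((if b then y else - y), z), y) \<in> A}"
proof -
  interpret prob_space "gauss_vec (y * eta) :: (real^'n) measure" by (rule prob_space_gauss_vec)
  show ?thesis unfolding data_cond_dist_def using assms data_point_measurable
    by (subst emeasure_distr) (auto simp: emeasure_eq_measure vimage_def)
qed

lemma prob_space_data_cond_dist:
  "prob_space (data_cond_dist eta y b :: ((real \<times> (real^'n::finite)) \<times> real) measure)"
  unfolding data_cond_dist_def
  by (intro prob_space.prob_space_distr prob_space_gauss_vec data_point_measurable)

lemma sets_data_cond_dist [simp]:
  "sets (data_cond_dist eta y b :: ((real \<times> (real^'n::finite)) \<times> real) measure) = sets borel"
  unfolding data_cond_dist_def by simp

lemma data_cond_dist_measurable:
  "data_cond_dist eta y \<in> measure_pmf q \<rightarrow>\<^sub>M subprob_algebra (borel :: ((real \<times> (real^'n::finite)) \<times> real) measure)"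
  by (simp add: measurable_pmf_measure1 space_subprob_algebra prob_space_imp_subprob_space prob_space_data_cond_dist)

lemma emeasure_data_label_dist:
  assumes A: "A \<in> sets borel" and p: "0 \<le> p" "p \<le> 1"
  shows "emeasure (data_label_dist p eta y :: ((real \<times> (real^'n::finite)) \<times> real) measure) A
     = p * measure (gauss_vec (y * eta)) {z. ((y, z), y) \<in> A}
       + (1 - p) * measure (gauss_vec (y * eta)) {z. ((- y, z), y) \<in> A}"
proof -
  have "emeasure (data_label_dist p eta y :: ((real \<times> (real^'n)) \<times> real) measure) A
      = (\<integral>\<^sup>+ b. emeasure (data_cond_dist eta y b) A \<partial>measure_pmf (bernoulli_pmf p))"
    unfolding data_label_dist_def using A
    by (intro emeasure_bind[OF _ data_cond_dist_measurable]) auto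
  also have "\<dots> = (\<Sum>b\<in>{True, False}. emeasure (data_cond_dist eta y b :: ((real \<times> (real^'n)) \<times> real) measure) A
      * pmf (bernoulli_pmf p) b)"
    by (rule nn_integral_measure_pmf_support) auto
  finally show ?thesis
    using p A by (simp add: emeasure_data_cond_dist ennreal_mult'[symmetric] mult.commute flip: ennreal_plus)
qed

lemma sets_data_label_dist [simp]:
  "sets (data_label_dist p eta y :: ((real \<times> (real^'n::finite)) \<times> real) measure) = sets borel"
  unfolding data_label_dist_def by (rule sets_bind) (auto simp: data_cond_dist_def)

lemma prob_space_data_label_dist:
  "prob_space (data_label_dist p eta y :: ((real \<times> (real^'n::finite)) \<times> real) measure)"
  unfolding data_label_dist_def
  by (rule prob_space.prob_space_bind[OF prob_space_measure_pmf _ data_cond_dist_measurable])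
    (simp add: prob_space_data_cond_dist)

lemma data_label_dist_measurable:
  "data_label_dist p eta \<in> measure_pmf q \<rightarrow>\<^sub>M subprob_algebra (borel :: ((real \<times> (real^'n::finite)) \<times> real) measure)"
  by (simp add: measurable_pmf_measure1 space_subprob_algebra prob_space_imp_subprob_space prob_space_data_label_dist)

lemma sets_data_dist [simp]: "sets (data_dist p eta :: ((real \<times> (real^'n::finite)) \<times> real) measure) = sets borel"
  unfolding data_dist_eq_bind_label_dist by (rule sets_bind) auto

lemma measure_data_dist:
  assumes A: "A \<in> sets borel" and p: "0 \<le> p" "p \<le> 1"
  shows "measure (data_dist p eta :: ((real \<times> (real^'n::finite)) \<times> real) measure) A
     = (\<Sum>y\<in>{-1, 1}. p * measure (gauss_vec (y * eta)) {z. ((y, z), y) \<in> A}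
          + (1 - p) * measure (gauss_vec (y * eta)) {z. ((- y, z), y) \<in> A}) / 2"
proof -
  define F where "F y = p * measure (gauss_vec (y * eta) :: (real^'n) measure) {z. ((y, z), y) \<in> A}
          + (1 - p) * measure (gauss_vec (y * eta) :: (real^'n) measure) {z. ((- y, z), y) \<in> A}" for y
  have F_nonneg: "0 \<le> F y" for y using p by (simp add: F_def)
  have "emeasure (data_dist p eta :: ((real \<times> (real^'n)) \<times> real) measure) A
      = (\<integral>\<^sup>+ y. emeasure (data_label_dist p eta y :: ((real \<times> (real^'n)) \<times> real) measure) A
          \<partial>measure_pmf (pmf_of_set {-1, 1}))"
    unfolding data_dist_eq_bind_label_dist using A
    by (intro emeasure_bind[OF _ data_label_dist_measurable]) auto
  also have "\<dots> = (\<Sum>y\<in>{-1, 1}. emeasure (data_label_dist p eta y :: ((real \<times> (real^'n)) \<times> real) measure) A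
      * pmf (pmf_of_set {-1, 1}) y)"
    by (rule nn_integral_measure_pmf_support) auto
  also have "\<dots> = (\<Sum>y\<in>{-1, 1}. ennreal (F y) * ennreal (1/2))"
    using A p by (intro sum.cong refl) (auto simp: emeasure_data_label_dist F_def pmf_of_set)
  also have "\<dots> = ennreal ((\<Sum>y\<in>{-1, 1}. F y) / 2)"
    using F_nonneg by (simp add: ennreal_divide_numeral[symmetric] divide_ennreal_def distrib_right ennreal_plus)
  finally have "emeasure (data_dist p eta :: ((real \<times> (real^'n)) \<times> real) measure) A
      = ennreal ((\<Sum>y\<in>{-1, 1}. F y) / 2)" .
  moreover have "0 \<le> (\<Sum>y\<in>{-1, 1}. F y) / 2" using F_nonneg by (simp add: sum_nonneg)
  ultimately show ?thesis unfolding F_def by (simp only: measure_def enn2real_ennreal)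
qed

lemma adv_risk_le_measure:
  assumes "A \<in> sets D" "{(x, y) \<in> space D. \<exists>x' \<in> S x. f x' \<noteq> y} \<subseteq> A"
  shows "adv_risk D f S \<le> measure D A"
  unfolding adv_risk_def using assms by (intro cInf_lower bdd_belowI[of _ 0]) auto

lemma adv_risk_ge:
  assumes "\<And>A. A \<in> sets D \<Longrightarrow> {(x, y) \<in> space D. \<exists>x' \<in> S x. f x' \<noteq> y} \<subseteq> A \<Longrightarrow> c \<le> measure D A"
  shows "c \<le> adv_risk D f S"
  unfolding adv_risk_def using assms by (intro cInf_greatest) auto

section \<open>Affine perturbations defeat every classifier\<close>

lemma signal_free_point_in_S_affine:
  assumes "\<bar>x0\<bar> = 1" and "\<bar>t\<bar> = 2 / sqrt (real CARD('n::finite))"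
  shows "(0, w) \<in> S_affine (real CARD('n)) (x0, (\<chi> i. t) + (w :: real^'n))"
proof -
  have "linf_norm (0::real, (\<chi> i. - t) :: real^'n) = \<bar>t\<bar>"
  proof -
    have "range (\<lambda>i::'n. \<bar>(\<chi> i. - t) $ i\<bar>) = {\<bar>t\<bar>}" by auto
    then show ?thesis unfolding linf_norm_def by simp
  qed
  moreover have "l1_norm (- x0, 0 :: real^'n) = 1"
    using assms(1) unfolding l1_norm_def by simp
  moreover have "(0, w) = (x0, (\<chi> i. t) + w) + (0, (\<chi> i. - t)) + (- x0, 0)"
    by (simp add: vec_eq_iff)
  ultimately show ?thesis
    unfolding S_affine_def using assms(2)
    by (intro CollectI exI[of _ "(0::real, (\<chi> i. - t) :: real^'n)"] exI[of _ "(- x0, 0 :: real^'n)"]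
        conjI bexI[of _ "2/3"]) auto
qed

lemma slice_in_sets_borel:
  assumes "A \<in> sets (borel :: ((real \<times> (real^'n::finite)) \<times> real) measure)"
  shows "{w :: real^'n. ((c, v + w), y) \<in> A} \<in> sets borel"
proof -
  have "(\<lambda>w::real^'n. ((c, v + w), y)) \<in> borel_measurable borel"
    by (intro borel_measurable_continuous_onI continuous_intros)
  from measurable_sets[OF this assms] show ?thesis by (simp add: vimage_def)
qed

lemma S_affine_error_slices_cover:
  fixes f :: "real \<times> (real^'n::finite) \<Rightarrow> real"
  assumes covers: "{(x, y). \<exists>x' \<in> S_affine (real CARD('n)) x. f x' \<noteq> y} \<subseteq> A"
    and x0: "\<bar>x0\<bar> = 1" "\<bar>x0'\<bar> = 1" and eta: "eta = 2 / sqrt (real CARD('n))"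
  shows "{w. ((x0, (\<chi> i. eta) + w), 1) \<in> A} \<union> {w. ((x0', (\<chi> i. - eta) + w), -1) \<in> A} = UNIV"
proof safe
  fix w :: "real^'n"
  assume "((x0', (\<chi> i. - eta) + w), -1) \<notin> A"
  moreover have "(0, w) \<in> S_affine (real CARD('n)) (x0', (\<chi> i. - eta) + w)"
    by (rule signal_free_point_in_S_affine[OF x0(2)]) (simp add: eta)
  ultimately have "f (0, w) = -1" using covers by force
  moreover have "(0, w) \<in> S_affine (real CARD('n)) (x0, (\<chi> i. eta) + w)"
    by (rule signal_free_point_in_S_affine[OF x0(1)]) (simp add: eta)
  ultimately show "((x0, (\<chi> i. eta) + w), 1) \<in> A" using covers by force
qed auto

lemma measure_S_affine_error_cover_ge_half:
  fixes f :: "real \<times> (real^'n::finite) \<Rightarrow> real" and p :: real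
  defines "D \<equiv> data_dist p (2 / sqrt (real CARD('n)))"
  assumes p: "0 \<le> p" "p \<le> 1" and A: "A \<in> sets D"
    and covers: "{(x, y) \<in> space D. \<exists>x' \<in> S_affine (real CARD('n)) x. f x' \<noteq> y} \<subseteq> A"
  shows "1/2 \<le> measure D A"
proof -
  define eta where "eta = 2 / sqrt (real CARD('n))"
  interpret G0: prob_space "gauss_vec 0 :: (real^'n) measure" by (rule prob_space_gauss_vec)
  have Ab: "A \<in> sets borel" using A by (simp add: D_def)
  have "space D = UNIV" using sets_eq_imp_space_eq[OF sets_data_dist] by (simp add: D_def)
  then have covers': "{(x, y). \<exists>x' \<in> S_affine (real CARD('n)) x. f x' \<noteq> y} \<subseteq> A"
    using covers by simp
  define B where "B x0 y = {w::real^'n. ((x0, (\<chi> i. y * eta) + w), y) \<in> A}" for x0 y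
  have B_sets: "B x0 y \<in> sets (gauss_vec 0)" for x0 y
    unfolding B_def using slice_in_sets_borel[OF Ab] by simp
  have shift: "measure (gauss_vec (y * eta) :: (real^'n) measure) {z. ((x0, z), y) \<in> A} = measure (gauss_vec 0) (B x0 y)" for x0 y
    using slice_in_sets_borel[OF Ab, of x0 0 y] unfolding B_def by (simp add: measure_gauss_vec_shift)
  have cover: "1 \<le> measure (gauss_vec 0) (B x0 1) + measure (gauss_vec 0) (B x0' (-1))"
    if "\<bar>x0\<bar> = 1" "\<bar>x0'\<bar> = 1" for x0 x0'
  proof -
    have "B x0 1 \<union> B x0' (-1) = UNIV"
      using S_affine_error_slices_cover[OF covers' that eta_def] unfolding B_def by simp
    then have "1 = measure (gauss_vec 0 :: (real^'n) measure) (B x0 1 \<union> B x0' (-1))"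
      using G0.prob_space by simp
    also have "\<dots> \<le> measure (gauss_vec 0) (B x0 1) + measure (gauss_vec 0) (B x0' (-1))"
      using B_sets by (intro measure_Un_le) auto
    finally show ?thesis .
  qed
  have "measure D A = (p * (measure (gauss_vec 0) (B 1 1) + measure (gauss_vec 0) (B (-1) (-1)))
      + (1 - p) * (measure (gauss_vec 0) (B (-1) 1) + measure (gauss_vec 0) (B 1 (-1)))) / 2"
    unfolding D_def eta_def[symmetric] measure_data_dist[OF Ab p] by (simp add: shift algebra_simps)
  also have "\<dots> \<ge> (p * 1 + (1 - p) * 1) / 2"
    using cover[of 1 "-1"] cover[of "-1" 1] p
    by (intro divide_right_mono add_mono mult_left_mono) auto
  finally show ?thesis by simp
qed

lemma adv_risk_S_affine_ge_half:
  fixes f :: "real \<times> (real^'n::finite) \<Rightarrow> real"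
  assumes "0 \<le> p" "p \<le> 1"
  shows "1/2 \<le> adv_risk (data_dist p (2 / sqrt (real CARD('n)))) f (S_affine (real CARD('n)))"
  using assms by (intro adv_risk_ge measure_S_affine_error_cover_ge_half)

section \<open>A classifier robust to both perturbation sets\<close>

definition robust_classifier :: "real \<Rightarrow> real \<times> (real^'n::finite) \<Rightarrow> real" where
  "robust_classifier s x = (let S = (\<Sum>i\<in>UNIV. snd x $ i) in
     if 3/4 \<le> fst x then (if S \<le> -(1455/1000) * s then -1 else 1)
     else if fst x \<le> -3/4 then (if (1455/1000) * s \<le> S then 1 else -1)
     else if 0 \<le> S then 1 else -1)"

lemma robust_classifier_range: "robust_classifier s x \<in> {-1, 1}"
  unfolding robust_classifier_def Let_def by auto

lemma abs_le_linf_norm: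
  "\<bar>fst r\<bar> \<le> linf_norm r" "\<bar>snd r $ i\<bar> \<le> linf_norm (r :: real \<times> (real^'n::finite))"
  unfolding linf_norm_def by (auto intro: max.coboundedI2 Max_ge)

lemma abs_sum_le_linf_norm:
  "\<bar>\<Sum>i\<in>UNIV. snd r $ i\<bar> \<le> real CARD('n) * linf_norm (r :: real \<times> (real^'n::finite))"
proof -
  have "\<bar>\<Sum>i\<in>UNIV. snd r $ i\<bar> \<le> (\<Sum>i\<in>UNIV. \<bar>snd r $ i\<bar>)" by (rule sum_abs)
  also have "\<dots> \<le> (\<Sum>i\<in>(UNIV::'n set). linf_norm r)" by (intro sum_mono abs_le_linf_norm)
  finally show ?thesis by simp
qed

lemma abs_fst_add_abs_sum_le_l1_norm:
  "\<bar>fst r\<bar> + \<bar>\<Sum>i\<in>UNIV. snd r $ i\<bar> \<le> l1_norm (r :: real \<times> (real^'n::finite))"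
  unfolding l1_norm_def using sum_abs[of "\<lambda>i. snd r $ i" UNIV] by linarith

lemma robust_classifier_correct:
  fixes z :: "real^'n::finite" and r :: "real \<times> (real^'n)"
  assumes d: "200 \<le> real CARD('n)"
    and y: "y = 1 \<or> y = -1" and margin: "(155/100) * sqrt (real CARD('n)) \<le> y * (\<Sum>i\<in>UNIV. z $ i)"
    and r: "linf_norm r \<le> 3 / sqrt (real CARD('n)) \<or> l1_norm r \<le> 3"
  shows "robust_classifier (sqrt (real CARD('n))) ((y, z) + r) = y"
proof -
  define s where "s = sqrt (real CARD('n))"
  define Sr where "Sr = (\<Sum>i\<in>UNIV. snd r $ i)"
  have s: "1413/100 \<le> s"
    unfolding s_def using d by (intro real_le_rsqrt) (simp add: power2_eq_square)
  have "(\<bar>fst r\<bar> \<le> 1/4 \<and> \<bar>Sr\<bar> \<le> 3 * s) \<or> \<bar>Sr\<bar> \<le> 3 - \<bar>fst r\<bar>"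
    using r
  proof
    assume r: "linf_norm r \<le> 3 / sqrt (real CARD('n))"
    have "3 / s \<le> 1/4" using s by (simp add: field_simps)
    then have "\<bar>fst r\<bar> \<le> 1/4"
      using abs_le_linf_norm(1)[of r] r unfolding s_def by linarith
    moreover have "real CARD('n) * (3 / s) = 3 * s" using s by (simp add: s_def field_simps)
    then have "\<bar>Sr\<bar> \<le> 3 * s"
      using abs_sum_le_linf_norm[of r] mult_left_mono[OF r, of "real CARD('n)"]
      unfolding Sr_def s_def by linarith
    ultimately show ?thesis by blast
  qed (use abs_fst_add_abs_sum_le_l1_norm[of r] Sr_def in linarith)
  moreover have "(\<Sum>i\<in>UNIV. snd ((y, z) + r) $ i) = (\<Sum>i\<in>UNIV. z $ i) + Sr"
    unfolding Sr_def by (simp add: sum.distrib)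
  moreover have "fst ((y, z) + r) = y + fst r" by simp
  ultimately show ?thesis
    using y margin s unfolding robust_classifier_def Let_def s_def[symmetric] by auto
qed

lemma gauss_vec_margin_failure:
  assumes y: "y = 1 \<or> y = -1"
  shows "measure (gauss_vec (y * (2 / sqrt (real CARD('n)))) :: (real^'n::finite) measure)
     {z. y * (\<Sum>i\<in>UNIV. z $ i) < (155/100) * sqrt (real CARD('n))} \<le> 327/1000"
proof -
  define s where "s = sqrt (real CARD('n))"
  define B :: "real set" where "B = (if y = 1 then {..< -(45/100)} else {45/100 <..})"
  have s: "0 < s" "s * s = real CARD('n)" unfolding s_def by simp_all
  have "{z :: real^'n. y * (\<Sum>i\<in>UNIV. z $ i) < (155/100) * s}
      = {z. ((\<Sum>i\<in>UNIV. z $ i) - real CARD('n) * (y * (2 / s))) / s \<in> B}"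
    using y s unfolding B_def by (auto simp: field_simps s(2)[symmetric])
  moreover have "measure std_normal B \<le> 327/1000"
  proof -
    have "measure std_normal {..< -(45/100)} \<le> 327/1000"
      using Phi_neg_045_le measure_std_normal_lessThan_le[of "-(45/100)"] by linarith
    moreover have "measure std_normal {45/100 <..} \<le> 327/1000"
      using calculation measure_std_normal_greaterThan[of "45/100"] by linarith
    ultimately show ?thesis unfolding B_def by simp
  qed
  ultimately show ?thesis
    using measure_gauss_vec_standardized_sum[of B "y * (2 / s)", where 'n='n]
    unfolding B_def s_def by auto
qed

definition margin_event :: "real \<Rightarrow> ((real \<times> (real^'n::finite)) \<times> real) set" where
  "margin_event s = {((x0, z), y). (y = 1 \<or> y = -1) \<and> x0 = y \<and> (155/100) * s \<le> y * (\<Sum>i\<in>UNIV. z $ i)}"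

lemma closed_margin_event: "closed (margin_event s :: ((real \<times> (real^'n::finite)) \<times> real) set)"
proof -
  have "closed {w :: (real \<times> (real^'n)) \<times> real. (snd w = 1 \<or> snd w = -1) \<and> fst (fst w) = snd w
      \<and> (155/100) * s \<le> snd w * (\<Sum>i\<in>UNIV. snd (fst w) $ i)}"
    by (intro closed_Collect_conj closed_Collect_disj closed_Collect_eq closed_Collect_le continuous_intros)
  moreover have "margin_event s = {w :: (real \<times> (real^'n)) \<times> real. (snd w = 1 \<or> snd w = -1)
      \<and> fst (fst w) = snd w \<and> (155/100) * s \<le> snd w * (\<Sum>i\<in>UNIV. snd (fst w) $ i)}"
    unfolding margin_event_def by auto
  ultimately show ?thesis by simp
qed

lemma robust_classifier_errors_subset_margin_failure:
  assumes d: "200 \<le> real CARD('n::finite)"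
  shows "{(x, y). \<exists>x' \<in> S_inf (real CARD('n)) x \<union> S_one x.
      robust_classifier (sqrt (real CARD('n))) x' \<noteq> y}
    \<subseteq> (- margin_event (sqrt (real CARD('n))) :: ((real \<times> (real^'n)) \<times> real) set)"
proof (clarify)
  fix x0 y x' and z :: "real^'n"
  assume x': "x' \<in> S_inf (real CARD('n)) (x0, z) \<union> S_one (x0, z)"
    and wrong: "robust_classifier (sqrt (real CARD('n))) x' \<noteq> y"
    and "((x0, z), y) \<in> margin_event (sqrt (real CARD('n)))"
  then have y: "y = 1 \<or> y = -1" "x0 = y" "(155/100) * sqrt (real CARD('n)) \<le> y * (\<Sum>i\<in>UNIV. z $ i)"
    unfolding margin_event_def by auto
  obtain r where r: "x' = (x0, z) + r" "linf_norm r \<le> 3 / sqrt (real CARD('n)) \<or> l1_norm r \<le> 3"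
    using x' unfolding S_inf_def S_one_def by auto
  show False
    using wrong robust_classifier_correct[OF d y(1,3) r(2)] unfolding r(1) y(2) by simp
qed

lemma measure_data_dist_margin_failure_le:
  assumes p: "0 \<le> p" "p \<le> 1"
  shows "measure (data_dist p (2 / sqrt (real CARD('n::finite))))
      (- margin_event (sqrt (real CARD('n))) :: ((real \<times> (real^'n)) \<times> real) set)
    \<le> p * (327/1000) + (1 - p)"
proof -
  define s where "s = sqrt (real CARD('n))"
  interpret G: prob_space "gauss_vec m :: (real^'n) measure" for m by (rule prob_space_gauss_vec)
  have per_label: "p * measure (gauss_vec (y * (2 / s))) {z :: real^'n. ((y, z), y) \<in> - margin_event s}
      + (1 - p) * measure (gauss_vec (y * (2 / s))) {z :: real^'n. ((- y, z), y) \<in> - margin_event s}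
      \<le> p * (327/1000) + (1 - p)" if y: "y = 1 \<or> y = -1" for y
  proof -
    have "{z. ((y, z), y) \<in> - margin_event s} = {z :: real^'n. y * (\<Sum>i\<in>UNIV. z $ i) < (155/100) * s}"
      using y unfolding margin_event_def by auto
    then have "measure (gauss_vec (y * (2 / s))) {z :: real^'n. ((y, z), y) \<in> - margin_event s} \<le> 327/1000"
      using gauss_vec_margin_failure[OF y, where 'n='n] unfolding s_def by simp
    then show ?thesis using p by (intro add_mono mult_left_mono mult_left_le G.prob_le_1) auto
  qed
  have "- margin_event s \<in> sets (borel :: ((real \<times> (real^'n)) \<times> real) measure)"
    by (intro borel_open open_Compl closed_margin_event)
  then have "measure (data_dist p (2 / s)) (- margin_event s :: ((real \<times> (real^'n)) \<times> real) set)
      = (\<Sum>y\<in>{-1, 1}. p * measure (gauss_vec (y * (2 / s))) {z :: real^'n. ((y, z), y) \<in> - margin_event s}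
        + (1 - p) * measure (gauss_vec (y * (2 / s))) {z :: real^'n. ((- y, z), y) \<in> - margin_event s}) / 2"
    using p by (rule measure_data_dist)
  also have "\<dots> \<le> p * (327/1000) + (1 - p)"
    using per_label[of 1] per_label[of "-1"] by simp
  finally show ?thesis unfolding s_def .
qed

lemma adv_risk_robust_classifier_le:
  assumes d: "200 \<le> real CARD('n::finite)" and p: "1 - 231/10000 \<le> p" "p \<le> 1"
  shows "adv_risk (data_dist p (2 / sqrt (real CARD('n))))
      (robust_classifier (sqrt (real CARD('n))) :: real \<times> (real^'n) \<Rightarrow> real)
      (\<lambda>x. S_inf (real CARD('n)) x \<union> S_one x) \<le> 0.35"
proof -
  define D where "D = (data_dist p (2 / sqrt (real CARD('n))) :: ((real \<times> (real^'n)) \<times> real) measure)"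
  define M where "M = (margin_event (sqrt (real CARD('n))) :: ((real \<times> (real^'n)) \<times> real) set)"
  have "- M \<in> sets D"
    unfolding D_def M_def sets_data_dist by (intro borel_open open_Compl closed_margin_event)
  then have "adv_risk D (robust_classifier (sqrt (real CARD('n)))) (\<lambda>x. S_inf (real CARD('n)) x \<union> S_one x)
      \<le> measure D (- M)"
    by (rule adv_risk_le_measure)
      (use robust_classifier_errors_subset_margin_failure[OF d] in \<open>auto simp: M_def\<close>)
  also have "\<dots> \<le> p * (327/1000) + (1 - p)"
    unfolding D_def M_def using p by (intro measure_data_dist_margin_failure_le) auto
  also have "\<dots> \<le> 0.35" using p by simp
  finally show ?thesis unfolding D_def .
qed

theorem mainTheorem6:
  assumes "CARD('n::finite) \<ge> 200"
  shows "(\<exists>g :: real \<times> (real^'n) \<Rightarrow> real. (\<forall>x. g x \<in> {-1, 1}) \<and>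
            adv_risk (data_dist (1 - Phi (-2)) (2 / sqrt (real CARD('n)))) g
              (\<lambda>x. S_inf (real CARD('n)) x \<union> S_one x) \<le> 0.35)
       \<and> (\<forall>f :: real \<times> (real^'n) \<Rightarrow> real. (\<forall>x. f x \<in> {-1, 1}) \<longrightarrow>
            adv_risk (data_dist (1 - Phi (-2)) (2 / sqrt (real CARD('n)))) f
              (S_affine (real CARD('n))) \<ge> 1 / 2)"
proof -
  have p: "1 - 231/10000 \<le> 1 - Phi (-2)" "1 - Phi (-2) \<le> 1"
    using Phi_neg_2_le by (simp_all add: Phi_def)
  have "robust_classifier (sqrt (real CARD('n))) x \<in> {-1, 1}" for x :: "real \<times> (real^'n)"
    by (rule robust_classifier_range)
  moreover have "adv_risk (data_dist (1 - Phi (-2)) (2 / sqrt (real CARD('n))))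
      (robust_classifier (sqrt (real CARD('n))) :: real \<times> (real^'n) \<Rightarrow> real)
      (\<lambda>x. S_inf (real CARD('n)) x \<union> S_one x) \<le> 0.35"
    using assms p by (intro adv_risk_robust_classifier_le) simp_all
  moreover have "1/2 \<le> adv_risk (data_dist (1 - Phi (-2)) (2 / sqrt (real CARD('n)))) f (S_affine (real CARD('n)))"
    for f :: "real \<times> (real^'n) \<Rightarrow> real"
    using p by (intro adv_risk_S_affine_ge_half) simp_all
  ultimately show ?thesis by blast
qed

end
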